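(* Assume $f$ has a unique global maximizer $g$. For every assignment $A$ and every $v\notin\mathcal C(A)$, if $1-g[v]\in\Psi_A[v]$ then there exists $S\subseteq\mathcal C(A)$ with $S\Rightarrow v$. If furthermore the problem contains no weak epistasis, then there exists $s\in\mathcal C(A)$ with $\{s\}\Rightarrow v$.
   Context: Fix $\ell\ge 1$, loci $V=\{0,\dots,\ell-1\}$, chromosomes $\vec y\in\{0,1\}^V$, and a fitness function $f:\{0,1\}^V\to\mathbb R$ to be maximized; $g$ denotes its unique global maximizer and $g[v]$ its allele at $v$. An assignment $A$ is a set of pairs $(v,a)$ ($v\in V$, $a\in\{0,1\}$) with at most one pair per locus; $A[v]=a$ if $(v,a)\in A$, else $A[v]=*$; coverage $\mathcal C(A)=\{v:A[v]\ne *\}$. $\Psi_A$ (constrained optima) is the set of chromosomes agreeing with $A$ on $\mathcal C(A)$ and of maximum fitness among all such chromosomes; $\Psi_A[v]=\{\psi_v:\psi\in\Psi_A\}$. Epistasis: for $v\in V$ and nonempty $S\subseteq V\setminus\{v\}$, $S\Rightarrow v$ iff for every $s\in S$ there exists an assignment $A$ with $\mathcal C(A)=S$ such that $\Psi_A[v]\neq\Psi_{A\setminus\{(s,A[s])\}}[v]$; the empty set is never epistatic. An epistasis $S\Rightarrow v$ with $|S|\ge2$ is weak if no nonempty proper subset $T\subsetneq S$ satisfies $T\Rightarrow v$; the problem contains no weak epistasis if no epistasis is weak. *)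

theory Defs
  imports Main "HOL.Real"
begin

text \<open>Loci are V = {0..<l}. A chromosome is a function nat => nat with values in {0,1}
on V and value 0 outside V (extensional representation).\<close>

definition chromosomes :: "nat \<Rightarrow> (nat \<Rightarrow> nat) set" where
  "chromosomes l = {y. (\<forall>v<l. y v \<in> {0,1}) \<and> (\<forall>v\<ge>l. y v = 0)}"

definition is_assignment :: "nat \<Rightarrow> (nat \<times> nat) set \<Rightarrow> bool" where
  "is_assignment l A \<longleftrightarrow> A \<subseteq> {0..<l} \<times> {0,1} \<and>
     (\<forall>v a b. (v,a) \<in> A \<longrightarrow> (v,b) \<in> A \<longrightarrow> a = b)"

definition coverage :: "(nat \<times> nat) set \<Rightarrow> nat set" where
  "coverage A = fst ` A"

definition agrees :: "(nat \<times> nat) set \<Rightarrow> (nat \<Rightarrow> nat) \<Rightarrow> bool" where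
  "agrees A y \<longleftrightarrow> (\<forall>(v,a)\<in>A. y v = a)"

definition Psi :: "nat \<Rightarrow> ((nat \<Rightarrow> nat) \<Rightarrow> real) \<Rightarrow> (nat \<times> nat) set \<Rightarrow> (nat \<Rightarrow> nat) set" where
  "Psi l f A = {y \<in> chromosomes l. agrees A y \<and>
      (\<forall>z \<in> chromosomes l. agrees A z \<longrightarrow> f z \<le> f y)}"

definition Psi_at :: "nat \<Rightarrow> ((nat \<Rightarrow> nat) \<Rightarrow> real) \<Rightarrow> (nat \<times> nat) set \<Rightarrow> nat \<Rightarrow> nat set" where
  "Psi_at l f A v = (\<lambda>y. y v) ` Psi l f A"

definition remove_locus :: "(nat \<times> nat) set \<Rightarrow> nat \<Rightarrow> (nat \<times> nat) set" where
  "remove_locus A s = {p \<in> A. fst p \<noteq> s}"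

definition epistatic :: "nat \<Rightarrow> ((nat \<Rightarrow> nat) \<Rightarrow> real) \<Rightarrow> nat set \<Rightarrow> nat \<Rightarrow> bool" where
  "epistatic l f S v \<longleftrightarrow> v < l \<and> S \<noteq> {} \<and> S \<subseteq> {0..<l} - {v} \<and>
     (\<forall>s\<in>S. \<exists>A. is_assignment l A \<and> coverage A = S \<and>
         Psi_at l f A v \<noteq> Psi_at l f (remove_locus A s) v)"

definition weak_epistatic :: "nat \<Rightarrow> ((nat \<Rightarrow> nat) \<Rightarrow> real) \<Rightarrow> nat set \<Rightarrow> nat \<Rightarrow> bool" where
  "weak_epistatic l f S v \<longleftrightarrow> epistatic l f S v \<and> card S \<ge> 2 \<and>
     \<not> (\<exists>T. T \<noteq> {} \<and> T \<subset> S \<and> epistatic l f T v)"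

definition no_weak_epistasis :: "nat \<Rightarrow> ((nat \<Rightarrow> nat) \<Rightarrow> real) \<Rightarrow> bool" where
  "no_weak_epistasis l f \<longleftrightarrow> (\<forall>S v. \<not> weak_epistatic l f S v)"

definition unique_global_maximizer :: "nat \<Rightarrow> ((nat \<Rightarrow> nat) \<Rightarrow> real) \<Rightarrow> (nat \<Rightarrow> nat) \<Rightarrow> bool" where
  "unique_global_maximizer l f g \<longleftrightarrow> g \<in> chromosomes l \<and>
     (\<forall>y \<in> chromosomes l. y \<noteq> g \<longrightarrow> f y < f g)"

end

theory Submission
  imports Defs
begin

text \<open>Under a unique maximizer g the unconstrained optima at v are just g[v], so the
  hypothesis says that A changes them. Take a minimal sub-assignment B of A that still changes
  them. Dropping any single locus of B restores the unconstrained optima, so B itself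
  witnesses the epistasis coverage(B) \<Rightarrow> v. Among the epistatic subsets of a given epistatic set, a minimal one
  cannot be weak, hence is a singleton.\<close>

lemma is_assignment_subset:
  "is_assignment l A \<Longrightarrow> B \<subseteq> A \<Longrightarrow> is_assignment l B"
  unfolding is_assignment_def by blast

lemma finite_assignment: "is_assignment l A \<Longrightarrow> finite A"
  unfolding is_assignment_def using finite_subset by blast

lemma finite_epistatic_set: "epistatic l f S v \<Longrightarrow> finite S"
  unfolding epistatic_def by (meson finite_Diff finite_atLeastLessThan finite_subset)

lemma coverage_subset_loci: "is_assignment l A \<Longrightarrow> coverage A \<subseteq> {0..<l}"
  unfolding is_assignment_def coverage_def by auto

lemma coverage_mono: "B \<subseteq> A \<Longrightarrow> coverage B \<subseteq> coverage A"
  unfolding coverage_def by (rule image_mono)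

lemma remove_locus_psubset: "s \<in> coverage B \<Longrightarrow> remove_locus B s \<subset> B"
  unfolding remove_locus_def coverage_def by force

lemma Psi_at_empty_unique_maximizer:
  assumes "unique_global_maximizer l f g"
  shows "Psi_at l f {} v = {g v}"
proof -
  have g: "g \<in> chromosomes l" and g_max: "\<And>y. y \<in> chromosomes l \<Longrightarrow> y \<noteq> g \<Longrightarrow> f y < f g"
    using assms unfolding unique_global_maximizer_def by auto
  have "Psi l f {} = {y \<in> chromosomes l. \<forall>z \<in> chromosomes l. f z \<le> f y}"
    unfolding Psi_def agrees_def by simp
  also have "\<dots> = {g}"
  proof (intro equalityI subsetI)
    fix y assume "y \<in> {y \<in> chromosomes l. \<forall>z \<in> chromosomes l. f z \<le> f y}"
    hence "y \<in> chromosomes l" and "f g \<le> f y" using g by auto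
    thus "y \<in> {g}" using g_max by force
  next
    fix y assume "y \<in> {g}"
    thus "y \<in> {y \<in> chromosomes l. \<forall>z \<in> chromosomes l. f z \<le> f y}"
      using g g_max by (auto intro: less_imp_le)
  qed
  finally show ?thesis unfolding Psi_at_def by simp
qed

lemma ex_epistatic_subset_if_Psi_at_differs:
  assumes A: "is_assignment l A" and "v < l" and v: "v \<notin> coverage A"
    and differs: "Psi_at l f A v \<noteq> Psi_at l f {} v"
  shows "\<exists>S \<subseteq> coverage A. epistatic l f S v"
proof -
  define P where "P = {B. B \<subseteq> A \<and> Psi_at l f B v \<noteq> Psi_at l f {} v}"
  have "finite P" unfolding P_def using finite_assignment[OF A] by simp
  moreover have "A \<in> P" unfolding P_def using differs by simp
  ultimately obtain B where B: "B \<in> P" and B_min: "\<And>C. C \<in> P \<Longrightarrow> C \<subseteq> B \<Longrightarrow> C = B"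
    using finite_has_minimal[of P] by blast
  from B have BA: "B \<subseteq> A" and B_differs: "Psi_at l f B v \<noteq> Psi_at l f {} v"
    unfolding P_def by auto
  have "epistatic l f (coverage B) v"
    unfolding epistatic_def
  proof (intro conjI ballI)
    show "v < l" by fact
    have "B \<noteq> {}" using B_differs by (intro notI) simp
    thus "coverage B \<noteq> {}" unfolding coverage_def by simp
    show "coverage B \<subseteq> {0..<l} - {v}"
      using coverage_mono[OF BA] coverage_subset_loci[OF A] v by auto
    fix s assume "s \<in> coverage B"
    hence "remove_locus B s \<subset> B" by (rule remove_locus_psubset)
    hence "remove_locus B s \<notin> P" using B_min by blast
    moreover have "remove_locus B s \<subseteq> A" using BA unfolding remove_locus_def by blast
    ultimately have "Psi_at l f (remove_locus B s) v = Psi_at l f {} v"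
      unfolding P_def by blast
    thus "\<exists>B'. is_assignment l B' \<and> coverage B' = coverage B \<and>
          Psi_at l f B' v \<noteq> Psi_at l f (remove_locus B' s) v"
      using is_assignment_subset[OF A BA] B_differs by metis
  qed
  with coverage_mono[OF BA] show ?thesis by blast
qed

lemma ex_singleton_epistatic_if_no_weak_epistasis:
  assumes "no_weak_epistasis l f" and S: "epistatic l f S v"
  shows "\<exists>s \<in> S. epistatic l f {s} v"
proof -
  define Q where "Q = {T. T \<subseteq> S \<and> epistatic l f T v}"
  have "finite Q" unfolding Q_def using finite_epistatic_set[OF S] by simp
  moreover have "S \<in> Q" unfolding Q_def using S by simp
  ultimately obtain T where T_Q: "T \<in> Q" and T_min: "\<And>U. U \<in> Q \<Longrightarrow> U \<subseteq> T \<Longrightarrow> U = T"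
    using finite_has_minimal[of Q] by blast
  from T_Q have TS: "T \<subseteq> S" and T: "epistatic l f T v" unfolding Q_def by auto
  have "\<not> weak_epistatic l f T v" using assms(1) unfolding no_weak_epistasis_def by blast
  moreover have "\<not> (\<exists>U. U \<noteq> {} \<and> U \<subset> T \<and> epistatic l f U v)"
    using T_min TS unfolding Q_def by blast
  ultimately have "card T < 2" using T unfolding weak_epistatic_def by auto
  moreover have "card T \<noteq> 0"
    using T finite_epistatic_set[OF T] unfolding epistatic_def by simp
  ultimately obtain s where "T = {s}" by (metis One_nat_def card_1_singletonE less_2_cases)
  thus ?thesis using TS T by blast
qed

theorem proposition7:
  fixes l :: nat and f :: "(nat \<Rightarrow> nat) \<Rightarrow> real" and g :: "nat \<Rightarrow> nat"
    and A :: "(nat \<times> nat) set" and v :: nat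
  assumes "l \<ge> 1"
    and "unique_global_maximizer l f g"
    and "is_assignment l A"
    and "v < l" and "v \<notin> coverage A"
    and "1 - g v \<in> Psi_at l f A v"
  shows "(\<exists>S \<subseteq> coverage A. epistatic l f S v) \<and>
         (no_weak_epistasis l f \<longrightarrow> (\<exists>s \<in> coverage A. epistatic l f {s} v))"
proof -
  have "g v \<in> {0, 1}"
    using assms(2,4) unfolding unique_global_maximizer_def chromosomes_def by auto
  hence "1 - g v \<noteq> g v" by auto
  hence "Psi_at l f A v \<noteq> Psi_at l f {} v"
    using assms(6) unfolding Psi_at_empty_unique_maximizer[OF assms(2)] by auto
  then obtain S where S: "S \<subseteq> coverage A" "epistatic l f S v"
    using ex_epistatic_subset_if_Psi_at_differs[OF assms(3-5)] by blast
  have "no_weak_epistasis l f \<Longrightarrow> \<exists>s \<in> coverage A. epistatic l f {s} v"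
    using ex_singleton_epistatic_if_no_weak_epistasis[OF _ S(2)] S(1) by blast
  with S show ?thesis by blast
qed

end
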